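(* Let $n\ge 2$ and let $-1=x_1<x_2<\cdots<x_n=1$ be real numbers. 1. For any labels $y_1,\ldots,y_n\in\mathbb{R}$, there exists $\mu\in\mathcal{M}(\mathbb{U},\mathbb{R})$ with $\operatorname{supp}(\mu)\subseteq F_{reg}$ which is optimal (attains the infimum) for the regression problem $$\inf_{\mu\in\mathcal{M}(\mathbb{U},\mathbb{R})}\int_{\mathbb{U}}|d\mu(u)| \quad\text{subject to}\quad f_\mu(x_i)=y_i\ \ \forall i\in[n].$$ 2. For any $k\ge 1$ and labels $y_1,\ldots,y_n\in[k]$, there exists $\nu\in\mathcal{M}(\mathbb{U},\mathbb{R}^k)$ with $\operatorname{supp}(\nu)\subseteq F_{class}$ which is optimal (attains the infimum) for the classification problem $$\inf_{\mu\in\mathcal{M}(\mathbb{U},\mathbb{R}^k)}\int_{\mathbb{U}}\|d\mu(u)\| \quad\text{subject to}\quad (e_{y_i}-e_l)^T f_\mu(x_i)\ge \mathbb{1}(y_i\neq l)\ \ \forall i\in[n],\ \forall l\in[k].$$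
   Context: $[n]=\{1,\ldots,n\}$; $e_j$ is the $j$-th canonical basis vector of $\mathbb{R}^k$; $\mathbb{1}(y_i\neq l)$ is $1$ if $y_i\neq l$ and $0$ otherwise. Let $\mathbb{U}=\{-1,1\}\times[-1,1]$. For $u=(s,c)\in\mathbb{U}$ and $x\in\mathbb{R}$ let $\phi_u(x)=(s(x-c))_+$, where $(t)_+=\max(t,0)$. $\mathcal{M}(\mathbb{U},\mathbb{R}^k)$ denotes the set of (finite) signed Radon measures on $\mathbb{U}$ with values in $\mathbb{R}^k$, and for such $\mu$, $f_\mu(x)=\int_{\mathbb{U}}\phi_u(x)\,d\mu(u)\in\mathbb{R}^k$. $\int_{\mathbb{U}}|d\mu(u)|$ is the total variation of a real measure and $\int_{\mathbb{U}}\|d\mu(u)\|$ is the total variation of a vector measure with respect to the Euclidean norm $\|\cdot\|$ on $\mathbb{R}^k$. Define $R_{reg}=\{x_1,x_n\}\cup\left\{x_i: 2\le i\le n-1,\ \frac{y_{i+1}-y_i}{x_{i+1}-x_i}\neq\frac{y_i-y_{i-1}}{x_i-x_{i-1}}\right\}$ (for real labels) and $F_{reg}=\{-1,1\}\times R_{reg}$. Define $R_{class}=\{x_1,x_n\}\cup\{x_i: 2\le i\le n-1,\ y_{i-1}\neq y_i \text{ or } y_{i+1}\neq y_i\}$ (for labels in $[k]$) and $F_{class}=\{-1,1\}\times R_{class}$. *)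

theory Defs
  imports "HOL-Analysis.Analysis"
begin

definition Ucal :: "(real \<times> real) set" where
  "Ucal = {-1, 1} \<times> {-1..1}"

definition phi :: "real \<times> real \<Rightarrow> real \<Rightarrow> real" where
  "phi u x = max (fst u * (x - snd u)) 0"

text \<open>A finite signed vector-valued (Radon) measure on U is represented as
  h \<cdot> rho: rho a finite nonnegative Borel measure on U and h an rho-integrable
  density with values in the target space. Every finite vector measure arises this way
  (Radon-Nikodym w.r.t. its total variation), and conversely.\<close>
definition vmeas :: "(real \<times> real) measure \<Rightarrow> (real \<times> real \<Rightarrow> 'v::{banach,second_countable_topology}) \<Rightarrow> bool" where
  "vmeas \<rho> h \<longleftrightarrow> space \<rho> = Ucal \<and> sets \<rho> = sets (restrict_space borel Ucal)
     \<and> finite_measure \<rho> \<and> integrable \<rho> h"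

definition vm_tv :: "(real \<times> real) measure \<Rightarrow> (real \<times> real \<Rightarrow> 'v::{banach,second_countable_topology}) \<Rightarrow> real" where
  "vm_tv \<rho> h = (\<integral>u. norm (h u) \<partial>\<rho>)"

definition vm_f :: "(real \<times> real) measure \<Rightarrow> (real \<times> real \<Rightarrow> 'v::{banach,second_countable_topology}) \<Rightarrow> real \<Rightarrow> 'v" where
  "vm_f \<rho> h x = (\<integral>u. phi u x *\<^sub>R h u \<partial>\<rho>)"

definition vm_support :: "(real \<times> real) measure \<Rightarrow> (real \<times> real \<Rightarrow> 'v::{banach,second_countable_topology}) \<Rightarrow> (real \<times> real) set" where
  "vm_support \<rho> h = {u \<in> Ucal. \<forall>e>0. (\<integral>\<^sup>+ v. ennreal (norm (h v)) * indicator (ball u e) v \<partial>\<rho>) > 0}"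

definition R_reg :: "nat \<Rightarrow> (nat \<Rightarrow> real) \<Rightarrow> (nat \<Rightarrow> real) \<Rightarrow> real set" where
  "R_reg n x y = {x 1, x n} \<union> {x i | i. 2 \<le> i \<and> i \<le> n - 1 \<and>
      (y (i+1) - y i) / (x (i+1) - x i) \<noteq> (y i - y (i-1)) / (x i - x (i-1))}"

definition F_reg :: "nat \<Rightarrow> (nat \<Rightarrow> real) \<Rightarrow> (nat \<Rightarrow> real) \<Rightarrow> (real \<times> real) set" where
  "F_reg n x y = {-1, 1} \<times> R_reg n x y"

definition R_class :: "nat \<Rightarrow> (nat \<Rightarrow> real) \<Rightarrow> (nat \<Rightarrow> 'k) \<Rightarrow> real set" where
  "R_class n x y = {x 1, x n} \<union> {x i | i. 2 \<le> i \<and> i \<le> n - 1 \<and>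
      (y (i-1) \<noteq> y i \<or> y (i+1) \<noteq> y i)}"

definition F_class :: "nat \<Rightarrow> (nat \<Rightarrow> real) \<Rightarrow> (nat \<Rightarrow> 'k) \<Rightarrow> (real \<times> real) set" where
  "F_class n x y = {-1, 1} \<times> R_class n x y"

definition reg_feasible :: "nat \<Rightarrow> (nat \<Rightarrow> real) \<Rightarrow> (nat \<Rightarrow> real) \<Rightarrow> (real \<times> real) measure \<Rightarrow> (real \<times> real \<Rightarrow> real) \<Rightarrow> bool" where
  "reg_feasible n x y \<rho> h \<longleftrightarrow> vmeas \<rho> h \<and> (\<forall>i\<in>{1..n}. vm_f \<rho> h (x i) = y i)"

definition class_feasible :: "nat \<Rightarrow> (nat \<Rightarrow> real) \<Rightarrow> (nat \<Rightarrow> 'k::finite) \<Rightarrow> (real \<times> real) measure \<Rightarrow> (real \<times> real \<Rightarrow> real ^ 'k) \<Rightarrow> bool" where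
  "class_feasible n x y \<rho> h \<longleftrightarrow> vmeas \<rho> h \<and>
     (\<forall>i\<in>{1..n}. \<forall>l. (axis (y i) 1 - axis l 1) \<bullet> vm_f \<rho> h (x i) \<ge> (if y i \<noteq> l then 1 else 0))"

end

(*
  For a finite set R of knots in [-1, 1] containing both endpoints, every measure can be
  replaced by one with atoms in {-1, 1} x R that has no larger total variation and the same
  network values on R: a neuron (s, c) is split between the two knots adjacent to c with the
  weights of the piecewise linear hat functions of R. This is exact at the knots because for
  a knot z the value phi_(s,c)(z) is affine in c between consecutive knots.

  A network with atoms in {-1, 1} x R is affine between consecutive knots. For R = R_reg the
  labels are affine there as well; for R = R_class they are constant there and the margin
  constraints cut out a convex set. Either way the constraints at the knots imply all
  constraints, and what remains is to minimise a sum of norms over a closed nonempty set of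
  coefficient vectors on the finite set {-1, 1} x R, where the minimum is attained.
*)
theory Submission
  imports Defs
begin

section \<open>Minimising a sum of norms\<close>

lemma finite_family_convergent_subsequence:
  fixes A :: "nat \<Rightarrow> 'a \<Rightarrow> 'v::{real_normed_vector,heine_borel}"
  assumes "finite F" and "\<And>k p. p \<in> F \<Longrightarrow> norm (A k p) \<le> M"
  shows "\<exists>r B. strict_mono r \<and> (\<forall>p\<in>F. (\<lambda>k. A (r k) p) \<longlonglongrightarrow> B p)"
  using assms
proof (induction F rule: finite_induct)
  case empty
  then show ?case by (auto intro: strict_mono_id)
next
  case (insert q F)
  then obtain r B where r: "strict_mono r" and rB: "\<forall>p\<in>F. (\<lambda>k. A (r k) p) \<longlonglongrightarrow> B p"
    by auto
  have "bounded (range (\<lambda>k. A (r k) q))"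
    using insert.prems by (auto simp: bounded_iff)
  then obtain l r' where r': "strict_mono r'" and l: "((\<lambda>k. A (r k) q) \<circ> r') \<longlonglongrightarrow> l"
    using bounded_imp_convergent_subsequence by blast
  have "(\<lambda>k. A ((r \<circ> r') k) p) \<longlonglongrightarrow> (B(q := l)) p" if "p \<in> insert q F" for p
  proof (cases "p = q")
    case True
    then show ?thesis using l by (simp add: comp_def)
  next
    case False
    then have "((\<lambda>k. A (r k) p) \<circ> r') \<longlonglongrightarrow> B p"
      using that rB r' LIMSEQ_subseq_LIMSEQ by blast
    then show ?thesis using False by (simp add: comp_def)
  qed
  moreover have "strict_mono (r \<circ> r')" using r r' by (rule strict_mono_o)
  ultimately show ?case by blast
qed

lemma sum_norm_minimum_exists:
  fixes P :: "('a \<Rightarrow> 'v::{real_normed_vector,heine_borel}) \<Rightarrow> bool"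
  assumes "finite F" and "P A\<^sub>0"
    and closed: "\<And>A B. (\<And>k. P (A k)) \<Longrightarrow> (\<forall>p\<in>F. (\<lambda>k. A k p) \<longlonglongrightarrow> B p) \<Longrightarrow> P B"
  shows "\<exists>B. P B \<and> (\<forall>A. P A \<longrightarrow> (\<Sum>p\<in>F. norm (B p)) \<le> (\<Sum>p\<in>F. norm (A p)))"
proof -
  define J where "J A = (\<Sum>p\<in>F. norm (A p))" for A :: "'a \<Rightarrow> 'v"
  define S where "S = J ` Collect P"
  have "S \<noteq> {}"
    using \<open>P A\<^sub>0\<close> by (auto simp: S_def)
  moreover have S_bdd: "bdd_below S"
    unfolding S_def J_def by (rule bdd_belowI[of _ 0]) (auto intro: sum_nonneg)
  ultimately have "Inf S \<in> closure S" by (rule closure_contains_Inf)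
  then obtain s where s: "\<And>k. s k \<in> S" and s_lim: "s \<longlonglongrightarrow> Inf S"
    by (auto simp: closure_sequential)
  have "\<forall>k. \<exists>A. P A \<and> J A = s k"
    using s unfolding S_def by (metis image_iff mem_Collect_eq)
  then obtain A where PA: "\<And>k. P (A k)" and JA: "\<And>k. J (A k) = s k"
    by metis
  obtain M where M: "\<And>k. norm (s k) \<le> M"
    using convergent_imp_Bseq[OF convergentI[OF s_lim]] by (metis BseqE)
  have "norm (A k p) \<le> M" if "p \<in> F" for k p
  proof -
    have "norm (A k p) \<le> J (A k)"
      unfolding J_def using that \<open>finite F\<close> by (intro member_le_sum) auto
    then show ?thesis using M[of k] JA[of k] by simp
  qed
  then obtain r B where r: "strict_mono r" and rB: "\<forall>p\<in>F. (\<lambda>k. A (r k) p) \<longlonglongrightarrow> B p"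
    using finite_family_convergent_subsequence[OF \<open>finite F\<close>] by blast
  have "(\<lambda>k. J (A (r k))) \<longlonglongrightarrow> J B"
    unfolding J_def using rB by (intro tendsto_sum tendsto_norm) auto
  moreover have "(\<lambda>k. J (A (r k))) \<longlonglongrightarrow> Inf S"
    using LIMSEQ_subseq_LIMSEQ[OF s_lim r] by (simp add: JA comp_def)
  ultimately have "J B = Inf S" by (rule LIMSEQ_unique)
  moreover have "Inf S \<le> J A" if "P A" for A
    using that S_bdd by (auto simp: S_def intro: cInf_lower)
  ultimately show ?thesis
    using closed[of "\<lambda>k. A (r k)" B] PA rB unfolding J_def by auto
qed

section \<open>Hat functions of a finite set of knots\<close>

definition consecutive_knots :: "real set \<Rightarrow> real \<Rightarrow> real \<Rightarrow> bool" where
  "consecutive_knots R a b \<longleftrightarrow> a \<in> R \<and> b \<in> R \<and> a < b \<and> (\<forall>r\<in>R. \<not> (a < r \<and> r < b))"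

lemma consecutive_knots_around:
  assumes "finite R" "r\<^sub>0 \<in> R" "r\<^sub>1 \<in> R" "r\<^sub>0 \<le> c" "c \<le> r\<^sub>1" "c \<notin> R"
  obtains a b where "consecutive_knots R a b" "a < c" "c < b"
proof
  define a where "a = Max {r\<in>R. r \<le> c}"
  define b where "b = Min {r\<in>R. c \<le> r}"
  have a: "a \<in> {r\<in>R. r \<le> c}" and b: "b \<in> {r\<in>R. c \<le> r}"
    unfolding a_def b_def using assms by (intro Max_in Min_in; auto)+
  with \<open>c \<notin> R\<close> show ac: "a < c" and cb: "c < b"
    using order_le_less by auto
  have "\<not> (a < r \<and> r < b)" if "r \<in> R" for r
  proof (cases "r \<le> c")
    case True
    then show ?thesis unfolding a_def using assms that by (simp add: Max_ge not_less)
  next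
    case False
    then show ?thesis unfolding b_def using assms that by (simp add: Min_le not_less)
  qed
  with a b ac cb show "consecutive_knots R a b"
    unfolding consecutive_knots_def by auto
qed

text \<open>If g has no knot on one side, g - 1 resp. g + 1 serves as a dummy neighbour; this only
  affects hat R g outside the hull of R.\<close>
definition knot_pred :: "real set \<Rightarrow> real \<Rightarrow> real" where
  "knot_pred R g = (if \<exists>r\<in>R. r < g then Max {r\<in>R. r < g} else g - 1)"

definition knot_succ :: "real set \<Rightarrow> real \<Rightarrow> real" where
  "knot_succ R g = (if \<exists>r\<in>R. g < r then Min {r\<in>R. g < r} else g + 1)"

definition hat :: "real set \<Rightarrow> real \<Rightarrow> real \<Rightarrow> real" where
  "hat R g c = max 0 (min ((c - knot_pred R g) / (g - knot_pred R g))
                          ((knot_succ R g - c) / (knot_succ R g - g)))"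

lemma knot_pred_less:
  assumes "finite R" shows "knot_pred R g < g"
proof (cases "\<exists>r\<in>R. r < g")
  case True
  then have "Max {r\<in>R. r < g} \<in> {r\<in>R. r < g}" using assms by (intro Max_in) auto
  then show ?thesis using True by (simp add: knot_pred_def)
qed (simp add: knot_pred_def)

lemma knot_succ_greater:
  assumes "finite R" shows "g < knot_succ R g"
proof (cases "\<exists>r\<in>R. g < r")
  case True
  then have "Min {r\<in>R. g < r} \<in> {r\<in>R. g < r}" using assms by (intro Min_in) auto
  then show ?thesis using True by (simp add: knot_succ_def)
qed (simp add: knot_succ_def)

lemma knot_pred_ge: "finite R \<Longrightarrow> r \<in> R \<Longrightarrow> r < g \<Longrightarrow> r \<le> knot_pred R g"
  unfolding knot_pred_def by (auto intro: Max_ge)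

lemma knot_succ_le: "finite R \<Longrightarrow> r \<in> R \<Longrightarrow> g < r \<Longrightarrow> knot_succ R g \<le> r"
  unfolding knot_succ_def by (auto intro: Min_le)

lemma consecutive_knots_succ_pred:
  assumes "finite R" "consecutive_knots R a b"
  shows "knot_succ R a = b" "knot_pred R b = a"
  using assms unfolding consecutive_knots_def knot_succ_def knot_pred_def
  by (auto intro!: Min_eqI Max_eqI)

lemma hat_nonneg: "0 \<le> hat R g c"
  unfolding hat_def by simp

lemma continuous_on_hat: "finite R \<Longrightarrow> continuous_on UNIV (hat R g)"
  using knot_pred_less[of R g] knot_succ_greater[of R g] unfolding hat_def
  by (intro continuous_intros) auto

lemma hat_self: "finite R \<Longrightarrow> hat R g g = 1"
  using knot_pred_less[of R g] knot_succ_greater[of R g] unfolding hat_def by simp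

lemma hat_eq_0_beyond_knot:
  assumes "finite R" "r \<in> R" "(g < r \<and> r \<le> c) \<or> (c \<le> r \<and> r < g)"
  shows "hat R g c = 0"
  using assms(3)
proof
  assume "g < r \<and> r \<le> c"
  then have "(knot_succ R g - c) / (knot_succ R g - g) \<le> 0"
    using knot_succ_le[OF assms(1,2), of g] knot_succ_greater[OF assms(1), of g]
    by (intro divide_nonpos_pos) auto
  then show ?thesis unfolding hat_def by linarith
next
  assume "c \<le> r \<and> r < g"
  then have "(c - knot_pred R g) / (g - knot_pred R g) \<le> 0"
    using knot_pred_ge[OF assms(1,2), of g] knot_pred_less[OF assms(1), of g]
    by (intro divide_nonpos_pos) auto
  then show ?thesis unfolding hat_def by linarith
qed

lemma hat_consecutive_knots:
  assumes "finite R" "consecutive_knots R a b" "a \<le> c" "c \<le> b"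
  shows "hat R a c = (b - c) / (b - a)" "hat R b c = (c - a) / (b - a)"
proof -
  have ab: "a < b" using assms(2) by (simp add: consecutive_knots_def)
  have "1 \<le> (c - knot_pred R a) / (a - knot_pred R a)"
    using knot_pred_less[OF assms(1), of a] assms(3) by simp
  moreover have "0 \<le> (b - c) / (b - a)" "(b - c) / (b - a) \<le> 1"
    using ab assms(3,4) by auto
  ultimately show "hat R a c = (b - c) / (b - a)"
    unfolding hat_def consecutive_knots_succ_pred[OF assms(1,2)] by simp
  have "1 \<le> (knot_succ R b - c) / (knot_succ R b - b)"
    using knot_succ_greater[OF assms(1), of b] assms(4) by simp
  moreover have "0 \<le> (c - a) / (b - a)" "(c - a) / (b - a) \<le> 1"
    using ab assms(3,4) by auto
  ultimately show "hat R b c = (c - a) / (b - a)"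
    unfolding hat_def consecutive_knots_succ_pred[OF assms(1,2)] by simp
qed

lemma sum_hat_interpolates:
  fixes \<psi> :: "real \<Rightarrow> 'v::real_vector"
  assumes R: "finite R" "r\<^sub>0 \<in> R" "r\<^sub>1 \<in> R" and c: "r\<^sub>0 \<le> c" "c \<le> r\<^sub>1"
    and affine: "\<And>a b t. consecutive_knots R a b \<Longrightarrow> a \<le> t \<Longrightarrow> t \<le> b \<Longrightarrow>
        \<psi> t = ((b - t) / (b - a)) *\<^sub>R \<psi> a + ((t - a) / (b - a)) *\<^sub>R \<psi> b"
  shows "(\<Sum>g\<in>R. hat R g c *\<^sub>R \<psi> g) = \<psi> c"
proof (cases "c \<in> R")
  case True
  have "hat R g c = 0" if "g \<in> R - {c}" for g
    using that True hat_eq_0_beyond_knot[OF R(1) True, of g c] by fastforce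
  then have "(\<Sum>g\<in>R. hat R g c *\<^sub>R \<psi> g) = (\<Sum>g\<in>{c}. hat R g c *\<^sub>R \<psi> g)"
    using R(1) True by (intro sum.mono_neutral_right) auto
  then show ?thesis using hat_self[OF R(1)] by simp
next
  case False
  then obtain a b where ab: "consecutive_knots R a b" "a < c" "c < b"
    using consecutive_knots_around[OF R c] by blast
  then have "a \<in> R" "b \<in> R" "a \<noteq> b" by (auto simp: consecutive_knots_def)
  have "hat R g c = 0" if "g \<in> R - {a, b}" for g
  proof -
    have "\<not> (a < g \<and> g < b)" "g \<noteq> a" "g \<noteq> b"
      using that ab(1) by (auto simp: consecutive_knots_def)
    then have "g < a \<or> b < g" by linarith
    then show ?thesis
    proof
      assume "g < a"
      then show ?thesis using hat_eq_0_beyond_knot[OF R(1) \<open>a \<in> R\<close>, of g c] ab(2) by simp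
    next
      assume "b < g"
      then show ?thesis using hat_eq_0_beyond_knot[OF R(1) \<open>b \<in> R\<close>, of g c] ab(3) by simp
    qed
  qed
  then have "(\<Sum>g\<in>R. hat R g c *\<^sub>R \<psi> g) = (\<Sum>g\<in>{a, b}. hat R g c *\<^sub>R \<psi> g)"
    using R(1) \<open>a \<in> R\<close> \<open>b \<in> R\<close> by (intro sum.mono_neutral_right) auto
  also have "\<dots> = ((b - c) / (b - a)) *\<^sub>R \<psi> a + ((c - a) / (b - a)) *\<^sub>R \<psi> b"
    using hat_consecutive_knots[OF R(1) ab(1)] ab(2,3) \<open>a \<noteq> b\<close> by simp
  also have "\<dots> = \<psi> c"
    using affine[OF ab(1), of c] ab(2,3) by simp
  finally show ?thesis .
qed

lemma phi_affine_between:
  assumes "a < b" "a \<le> t" "t \<le> b" "\<not> (a < g \<and> g < b)"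
  shows "phi (s, g) t = ((b - t) / (b - a)) * phi (s, g) a + ((t - a) / (b - a)) * phi (s, g) b"
proof -
  have comb: "((b - t) / (b - a)) * (s * (a - g)) + ((t - a) / (b - a)) * (s * (b - g)) = s * (t - g)"
    using assms(1) by (simp add: divide_simps) (simp add: algebra_simps)
  have "g \<le> a \<or> b \<le> g" using assms(4) by linarith
  then consider "0 \<le> s * (a - g)" "0 \<le> s * (t - g)" "0 \<le> s * (b - g)"
    | "s * (a - g) \<le> 0" "s * (t - g) \<le> 0" "s * (b - g) \<le> 0"
    using assms(1-3) by (cases "0 \<le> s") (auto simp: zero_le_mult_iff mult_le_0_iff)
  then show ?thesis
    by cases (use comb in \<open>simp_all add: phi_def\<close>)
qed

lemma phi_swap: "phi (s, c) z = phi (- s, z) c"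
  unfolding phi_def by (simp add: algebra_simps)

lemma sum_hat_eq_1:
  assumes "finite R" "r\<^sub>0 \<in> R" "r\<^sub>1 \<in> R" "r\<^sub>0 \<le> c" "c \<le> r\<^sub>1"
  shows "(\<Sum>g\<in>R. hat R g c) = 1"
proof -
  have "(1::real) = ((b - t) / (b - a)) *\<^sub>R 1 + ((t - a) / (b - a)) *\<^sub>R 1"
    if "consecutive_knots R a b" for a b t :: real
    using that by (simp add: consecutive_knots_def divide_simps)
  from sum_hat_interpolates[OF assms this] show ?thesis by simp
qed

lemma sum_hat_phi:
  assumes "finite R" "r\<^sub>0 \<in> R" "r\<^sub>1 \<in> R" "r\<^sub>0 \<le> c" "c \<le> r\<^sub>1" "z \<in> R"
  shows "(\<Sum>g\<in>R. hat R g c * phi (s, g) z) = phi (s, c) z"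
proof -
  have "phi (s, t) z = ((b - t) / (b - a)) *\<^sub>R phi (s, a) z + ((t - a) / (b - a)) *\<^sub>R phi (s, b) z"
    if "consecutive_knots R a b" "a \<le> t" "t \<le> b" for a b t
  proof -
    have "a < b" "\<not> (a < z \<and> z < b)"
      using that(1) \<open>z \<in> R\<close> unfolding consecutive_knots_def by auto
    from phi_affine_between[OF this(1) that(2,3) this(2), of "- s"] show ?thesis
      by (simp add: phi_swap[of s _ z])
  qed
  from sum_hat_interpolates[OF assms(1-5) this] show ?thesis by simp
qed

definition relu_net :: "(real \<times> real) set \<Rightarrow> (real \<times> real \<Rightarrow> 'v::real_vector) \<Rightarrow> real \<Rightarrow> 'v" where
  "relu_net F A z = (\<Sum>p\<in>F. phi p z *\<^sub>R A p)"

lemma relu_net_affine_between: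
  assumes "a < b" "a \<le> t" "t \<le> b" and F: "\<And>p. p \<in> F \<Longrightarrow> \<not> (a < snd p \<and> snd p < b)"
  shows "relu_net F A t = ((b - t) / (b - a)) *\<^sub>R relu_net F A a + ((t - a) / (b - a)) *\<^sub>R relu_net F A b"
proof -
  have "phi p t *\<^sub>R A p = ((b - t) / (b - a)) *\<^sub>R (phi p a *\<^sub>R A p) + ((t - a) / (b - a)) *\<^sub>R (phi p b *\<^sub>R A p)"
    if "p \<in> F" for p
    using phi_affine_between[OF assms(1-3) F[OF that], of "fst p"] by (simp add: scaleR_add_left)
  then have "relu_net F A t =
      (\<Sum>p\<in>F. ((b - t) / (b - a)) *\<^sub>R (phi p a *\<^sub>R A p) + ((t - a) / (b - a)) *\<^sub>R (phi p b *\<^sub>R A p))"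
    unfolding relu_net_def by (rule sum.cong[OF refl])
  then show ?thesis by (simp add: relu_net_def sum.distrib scaleR_sum_right)
qed

lemma relu_net_update:
  assumes "finite F" "q \<in> F"
  shows "relu_net F (A(q := A q + e)) z = relu_net F A z + phi q z *\<^sub>R e"
proof -
  have "relu_net F (A(q := A q + e)) z = (\<Sum>p\<in>F. phi p z *\<^sub>R A p + (if p = q then phi q z *\<^sub>R e else 0))"
    unfolding relu_net_def by (rule sum.cong) (auto simp: scaleR_add_right)
  then show ?thesis using assms by (simp add: sum.distrib relu_net_def)
qed

lemma tendsto_relu_net:
  fixes A :: "nat \<Rightarrow> real \<times> real \<Rightarrow> 'v::real_normed_vector"
  assumes "\<forall>p\<in>F. (\<lambda>k. A k p) \<longlonglongrightarrow> B p"
  shows "(\<lambda>k. relu_net F (A k) z) \<longlonglongrightarrow> relu_net F B z"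
  unfolding relu_net_def using assms by (intro tendsto_sum tendsto_scaleR tendsto_const) auto

text \<open>Knots are added in increasing order; the new atom (1, max S) vanishes at all earlier
  knots, and the first knot a is served by the atom (-1, b).\<close>
lemma relu_net_interpolates:
  fixes v :: "real \<Rightarrow> 'v::real_vector"
  assumes "finite R" "a \<in> R" "b \<in> R" "a < b" and bounds: "\<And>r. r \<in> R \<Longrightarrow> a \<le> r \<and> r \<le> b"
  shows "\<exists>A. \<forall>r\<in>R. relu_net ({-1, 1} \<times> R) A r = v r"
proof -
  let ?F = "{-1, 1::real} \<times> R"
  have "\<exists>A. \<forall>r\<in>S. relu_net ?F A r = v r" if "finite S" "S \<subseteq> R" "S \<noteq> {} \<longrightarrow> a \<in> S" for S
    using that
  proof (induction S rule: finite_linorder_max_induct)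
    case empty
    then show ?case by simp
  next
    case (insert c S)
    have "S \<noteq> {} \<longrightarrow> a \<in> S"
      using insert.hyps(2) insert.prems bounds by (fastforce simp: not_less)
    with insert obtain A where A: "\<forall>r\<in>S. relu_net ?F A r = v r" by auto
    define q :: "real \<times> real" where "q = (if S = {} then (-1, b) else (1, Max S))"
    have q: "q \<in> ?F \<and> (\<forall>r\<in>S. phi q r = 0) \<and> 0 < phi q c"
    proof (cases "S = {}")
      case True
      then show ?thesis using insert.prems \<open>b \<in> R\<close> \<open>a < b\<close> by (auto simp: q_def phi_def)
    next
      case False
      then have "Max S \<in> S" using insert.hyps(1) by simp
      then have "Max S \<in> R" "Max S < c" using insert.hyps(2) insert.prems(1) by auto
      then show ?thesis using False insert.hyps insert.prems by (auto simp: q_def phi_def)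
    qed
    define A' where "A' = A(q := A q + (1 / phi q c) *\<^sub>R (v c - relu_net ?F A c))"
    have "relu_net ?F A' r = relu_net ?F A r + (phi q r / phi q c) *\<^sub>R (v c - relu_net ?F A c)" for r
      unfolding A'_def using \<open>finite R\<close> q by (simp add: relu_net_update)
    then have "\<forall>r\<in>insert c S. relu_net ?F A' r = v r"
      using A q by simp
    then show ?case by blast
  qed
  then show ?thesis using assms by blast
qed

section \<open>Pushing a measure onto the knots\<close>

text \<open>For signs s, s' the factor (1 + s s') / 2 is the indicator of s = s', written so that
  it is continuous in u.\<close>
definition knot_weight :: "real set \<Rightarrow> real \<times> real \<Rightarrow> real \<times> real \<Rightarrow> real" where
  "knot_weight R p u = ((1 + fst p * fst u) / 2) * hat R (snd p) (snd u)"

lemma Ucal_iff: "u \<in> Ucal \<longleftrightarrow> (fst u = -1 \<or> fst u = 1) \<and> -1 \<le> snd u \<and> snd u \<le> 1"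
  unfolding Ucal_def by (cases u) auto

lemma continuous_on_knot_weight: "finite R \<Longrightarrow> continuous_on UNIV (knot_weight R p)"
  unfolding knot_weight_def
  by (intro continuous_intros continuous_on_compose2[OF continuous_on_hat]) auto

lemma knot_weight_nonneg: "u \<in> Ucal \<Longrightarrow> p \<in> {-1, 1} \<times> R \<Longrightarrow> 0 \<le> knot_weight R p u"
  unfolding knot_weight_def Ucal_iff by (auto intro!: mult_nonneg_nonneg hat_nonneg)

lemma sum_knot_weight:
  assumes "finite R" "-1 \<in> R" "1 \<in> R" "u \<in> Ucal"
  shows "(\<Sum>p\<in>{-1, 1} \<times> R. knot_weight R p u) = 1"
proof -
  have "(\<Sum>p\<in>{-1, 1} \<times> R. knot_weight R p u)
      = (\<Sum>s\<in>{-1, 1}. (1 + s * fst u) / 2 * (\<Sum>g\<in>R. hat R g (snd u)))"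
    by (simp add: sum.cartesian_product' knot_weight_def sum_distrib_left)
  also have "\<dots> = 1"
    using sum_hat_eq_1[OF assms(1-3)] assms(4) by (simp add: Ucal_iff add_divide_distrib[symmetric])
  finally show ?thesis .
qed

lemma knot_weight_le_1:
  assumes "finite R" "-1 \<in> R" "1 \<in> R" "u \<in> Ucal" "p \<in> {-1, 1} \<times> R"
  shows "knot_weight R p u \<le> 1"
proof -
  have "knot_weight R p u \<le> (\<Sum>p\<in>{-1, 1} \<times> R. knot_weight R p u)"
    using assms knot_weight_nonneg by (intro member_le_sum) auto
  then show ?thesis using sum_knot_weight[OF assms(1-4)] by simp
qed

lemma sum_phi_knot_weight:
  assumes "finite R" "-1 \<in> R" "1 \<in> R" "u \<in> Ucal" "z \<in> R"
  shows "(\<Sum>p\<in>{-1, 1} \<times> R. phi p z * knot_weight R p u) = phi u z"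
proof -
  have "(\<Sum>p\<in>{-1, 1} \<times> R. phi p z * knot_weight R p u)
      = (\<Sum>s\<in>{-1, 1}. (1 + s * fst u) / 2 * (\<Sum>g\<in>R. hat R g (snd u) * phi (s, g) z))"
    by (simp add: sum.cartesian_product' knot_weight_def sum_distrib_left algebra_simps)
  also have "\<dots> = (\<Sum>s\<in>{-1, 1}. (1 + s * fst u) / 2 * phi (s, snd u) z)"
    using sum_hat_phi[OF assms(1-3) _ _ assms(5)] assms(4) by (simp add: Ucal_iff)
  also have "\<dots> = phi u z"
    using assms(4) by (cases u) (auto simp: Ucal_iff)
  finally show ?thesis .
qed

lemma vmeas_borel_measurable_continuous:
  assumes "vmeas \<rho> h" "continuous_on UNIV f"
  shows "f \<in> borel_measurable \<rho>"
proof -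
  have "f \<in> borel_measurable (restrict_space borel Ucal)"
    using assms(2) by (intro measurable_restrict_space1 borel_measurable_continuous_onI)
  then show ?thesis
    using assms(1) measurable_cong_sets[OF _ refl] unfolding vmeas_def by blast
qed

lemma integrable_knot_weight_scaleR:
  fixes h :: "real \<times> real \<Rightarrow> 'v::{banach,second_countable_topology}"
  assumes R: "finite R" "-1 \<in> R" "1 \<in> R" and "vmeas \<rho> h" "p \<in> {-1, 1} \<times> R"
  shows "integrable \<rho> (\<lambda>u. knot_weight R p u *\<^sub>R h u)"
proof (rule Bochner_Integration.integrable_bound)
  show h: "integrable \<rho> h" using \<open>vmeas \<rho> h\<close> by (simp add: vmeas_def)
  show "(\<lambda>u. knot_weight R p u *\<^sub>R h u) \<in> borel_measurable \<rho>"
    using vmeas_borel_measurable_continuous[OF \<open>vmeas \<rho> h\<close> continuous_on_knot_weight[OF R(1)]] h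
    by (intro borel_measurable_scaleR) auto
  have "norm (knot_weight R p u *\<^sub>R h u) \<le> norm (h u)" if "u \<in> space \<rho>" for u
  proof -
    have "u \<in> Ucal" using that \<open>vmeas \<rho> h\<close> by (simp add: vmeas_def)
    then show ?thesis
      using knot_weight_nonneg[of u p R] knot_weight_le_1[OF R _ \<open>p \<in> _\<close>] \<open>p \<in> _\<close>
      by (simp add: mult_left_le_one_le)
  qed
  then show "AE u in \<rho>. norm (knot_weight R p u *\<^sub>R h u) \<le> norm (h u)"
    by (intro AE_I2)
qed

definition push_to_knots ::
    "real set \<Rightarrow> (real \<times> real) measure \<Rightarrow> (real \<times> real \<Rightarrow> 'v::{banach,second_countable_topology}) \<Rightarrow>
     real \<times> real \<Rightarrow> 'v" where
  "push_to_knots R \<rho> h p = (\<integral>u. knot_weight R p u *\<^sub>R h u \<partial>\<rho>)"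

lemma sum_norm_push_to_knots_le:
  fixes h :: "real \<times> real \<Rightarrow> 'v::{banach,second_countable_topology}"
  assumes R: "finite R" "-1 \<in> R" "1 \<in> R" and vm: "vmeas \<rho> h"
  shows "(\<Sum>p\<in>{-1, 1} \<times> R. norm (push_to_knots R \<rho> h p)) \<le> vm_tv \<rho> h"
proof -
  let ?F = "{-1, 1::real} \<times> R" and ?W = "knot_weight R"
  have U: "u \<in> Ucal" if "u \<in> space \<rho>" for u
    using that vm by (simp add: vmeas_def)
  have norm_Wh: "norm (?W p u *\<^sub>R h u) = ?W p u * norm (h u)" if "p \<in> ?F" "u \<in> space \<rho>" for p u
    using knot_weight_nonneg[OF U[OF that(2)] that(1)] by simp
  have "(\<Sum>p\<in>?F. norm (push_to_knots R \<rho> h p)) \<le> (\<Sum>p\<in>?F. \<integral>u. ?W p u * norm (h u) \<partial>\<rho>)"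
  proof (rule sum_mono)
    fix p assume "p \<in> ?F"
    have "norm (push_to_knots R \<rho> h p) \<le> (\<integral>u. norm (?W p u *\<^sub>R h u) \<partial>\<rho>)"
      unfolding push_to_knots_def by (rule Bochner_Integration.integral_norm_bound)
    also have "\<dots> = (\<integral>u. ?W p u * norm (h u) \<partial>\<rho>)"
      using norm_Wh \<open>p \<in> ?F\<close> by (intro Bochner_Integration.integral_cong) auto
    finally show "norm (push_to_knots R \<rho> h p) \<le> (\<integral>u. ?W p u * norm (h u) \<partial>\<rho>)" .
  qed
  also have "\<dots> = (\<integral>u. (\<Sum>p\<in>?F. ?W p u * norm (h u)) \<partial>\<rho>)"
  proof (rule Bochner_Integration.integral_sum[symmetric])
    fix p assume "p \<in> ?F"
    then have "integrable \<rho> (\<lambda>u. norm (?W p u *\<^sub>R h u))"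
      using integrable_knot_weight_scaleR[OF R vm] by (intro integrable_norm)
    moreover have "integrable \<rho> (\<lambda>u. norm (?W p u *\<^sub>R h u)) = integrable \<rho> (\<lambda>u. ?W p u * norm (h u))"
      by (rule Bochner_Integration.integrable_cong) (use norm_Wh \<open>p \<in> ?F\<close> in auto)
    ultimately show "integrable \<rho> (\<lambda>u. ?W p u * norm (h u))" by simp
  qed
  also have "\<dots> = vm_tv \<rho> h"
    unfolding vm_tv_def using sum_knot_weight[OF R] U
    by (intro Bochner_Integration.integral_cong) (auto simp: sum_distrib_right[symmetric])
  finally show ?thesis .
qed

lemma relu_net_push_to_knots:
  fixes h :: "real \<times> real \<Rightarrow> 'v::{banach,second_countable_topology}"
  assumes R: "finite R" "-1 \<in> R" "1 \<in> R" and vm: "vmeas \<rho> h" and "z \<in> R"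
  shows "relu_net ({-1, 1} \<times> R) (push_to_knots R \<rho> h) z = vm_f \<rho> h z"
proof -
  let ?F = "{-1, 1::real} \<times> R" and ?W = "knot_weight R"
  have "relu_net ?F (push_to_knots R \<rho> h) z = (\<Sum>p\<in>?F. \<integral>u. (phi p z * ?W p u) *\<^sub>R h u \<partial>\<rho>)"
    unfolding relu_net_def push_to_knots_def by (simp add: integral_scaleR_right[symmetric])
  also have "\<dots> = (\<integral>u. (\<Sum>p\<in>?F. (phi p z * ?W p u) *\<^sub>R h u) \<partial>\<rho>)"
  proof (rule Bochner_Integration.integral_sum[symmetric])
    fix p assume "p \<in> ?F"
    have "integrable \<rho> (\<lambda>u. phi p z *\<^sub>R (?W p u *\<^sub>R h u))"
      using integrable_knot_weight_scaleR[OF R vm \<open>p \<in> ?F\<close>] by (rule integrable_scaleR_right)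
    then show "integrable \<rho> (\<lambda>u. (phi p z * ?W p u) *\<^sub>R h u)" by simp
  qed
  also have "\<dots> = vm_f \<rho> h z"
    unfolding vm_f_def using sum_phi_knot_weight[OF R _ \<open>z \<in> R\<close>] vm
    by (intro Bochner_Integration.integral_cong) (auto simp: vmeas_def scaleR_sum_left[symmetric])
  finally show ?thesis .
qed

definition discrete_measure :: "(real \<times> real) set \<Rightarrow> (real \<times> real) measure" where
  "discrete_measure F = distr (count_space F) (restrict_space borel Ucal) (\<lambda>u. u)"

definition discrete_density :: "(real \<times> real) set \<Rightarrow> (real \<times> real \<Rightarrow> 'v::real_vector) \<Rightarrow> real \<times> real \<Rightarrow> 'v" where
  "discrete_density F A u = (if u \<in> F then A u else 0)"

lemma id_measurable_count_space_Ucal: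
  "F \<subseteq> Ucal \<Longrightarrow> (\<lambda>u. u) \<in> count_space F \<rightarrow>\<^sub>M restrict_space borel Ucal"
  by (auto simp: space_restrict_space)

lemma borel_measurable_discrete_density:
  fixes A :: "real \<times> real \<Rightarrow> 'v::{banach,second_countable_topology}"
  assumes "finite F"
  shows "discrete_density F A \<in> borel_measurable (restrict_space borel Ucal)"
proof -
  have "(\<Sum>p\<in>F. indicator {p} u *\<^sub>R A p) = discrete_density F A u" for u
  proof -
    have "(\<Sum>p\<in>F. indicator {p} u *\<^sub>R A p) = (\<Sum>p\<in>F. if p = u then A u else 0)"
      by (rule sum.cong) (auto simp: indicator_def)
    then show ?thesis using assms by (simp add: discrete_density_def)
  qed
  then have "discrete_density F A = (\<lambda>u. \<Sum>p\<in>F. indicator {p} u *\<^sub>R A p)" by simp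
  moreover have "(\<lambda>u. \<Sum>p\<in>F. indicator {p} u *\<^sub>R A p) \<in> borel_measurable borel"
    by (intro borel_measurable_sum borel_measurable_scaleR borel_measurable_indicator borel_closed) auto
  ultimately show ?thesis by (simp add: measurable_restrict_space1)
qed

context
  fixes F :: "(real \<times> real) set" and A :: "real \<times> real \<Rightarrow> 'v::{banach,second_countable_topology}"
  assumes F: "finite F" "F \<subseteq> Ucal"
begin

lemma vmeas_discrete: "vmeas (discrete_measure F) (discrete_density F A)"
proof -
  interpret finite_measure "count_space F" using F(1) by (rule finite_measure_count_space)
  have "finite_measure (discrete_measure F)"
    unfolding discrete_measure_def
    using id_measurable_count_space_Ucal[OF F(2)] by (intro finite_measure_distr)
  moreover have "integrable (discrete_measure F) (discrete_density F A)"
    unfolding discrete_measure_def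
    by (subst integrable_distr_eq[OF id_measurable_count_space_Ucal[OF F(2)]
          borel_measurable_discrete_density[OF F(1)]])
       (simp add: integrable_count_space F(1))
  ultimately show ?thesis
    unfolding vmeas_def by (simp add: discrete_measure_def space_restrict_space)
qed

lemma integral_discrete:
  fixes f :: "real \<times> real \<Rightarrow> 'w::{banach,second_countable_topology}"
  assumes "f \<in> borel_measurable (restrict_space borel Ucal)"
  shows "(\<integral>u. f u \<partial>discrete_measure F) = (\<Sum>p\<in>F. f p)"
  unfolding discrete_measure_def
  using integral_distr[OF id_measurable_count_space_Ucal[OF F(2)] assms]
    lebesgue_integral_count_space_finite[OF F(1)] by simp

lemma vm_f_discrete: "vm_f (discrete_measure F) (discrete_density F A) = relu_net F A"
proof
  fix z
  have "(\<lambda>u. phi u z *\<^sub>R discrete_density F A u) \<in> borel_measurable (restrict_space borel Ucal)"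
    unfolding phi_def
    by (intro borel_measurable_scaleR measurable_restrict_space1 borel_measurable_continuous_onI
        continuous_intros borel_measurable_discrete_density[OF F(1)])
  then show "vm_f (discrete_measure F) (discrete_density F A) z = relu_net F A z"
    unfolding vm_f_def relu_net_def by (simp add: integral_discrete discrete_density_def)
qed

lemma vm_tv_discrete: "vm_tv (discrete_measure F) (discrete_density F A) = (\<Sum>p\<in>F. norm (A p))"
proof -
  have "(\<lambda>u. norm (discrete_density F A u)) \<in> borel_measurable (restrict_space borel Ucal)"
    using borel_measurable_discrete_density[OF F(1), of A] by measurable
  then show ?thesis
    unfolding vm_tv_def by (simp add: integral_discrete discrete_density_def)
qed

lemma vm_support_discrete: "vm_support (discrete_measure F) (discrete_density F A) \<subseteq> F"
proof
  fix u assume u: "u \<in> vm_support (discrete_measure F) (discrete_density F A)"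
  show "u \<in> F"
  proof (rule ccontr)
    assume "u \<notin> F"
    moreover have "open (- F)" using F(1) by (simp add: finite_imp_closed open_Compl)
    ultimately obtain e where "e > 0" "ball u e \<subseteq> - F"
      using open_contains_ball by blast
    then have "(\<lambda>v. ennreal (norm (discrete_density F A v)) * indicator (ball u e) v) = (\<lambda>v. 0)"
      by (auto simp: fun_eq_iff discrete_density_def indicator_def)
    then show False using u \<open>e > 0\<close> unfolding vm_support_def by auto
  qed
qed

end

section \<open>Pointwise constrained problems\<close>

definition constraint_feasible ::
    "nat \<Rightarrow> (nat \<Rightarrow> real) \<Rightarrow> (nat \<Rightarrow> 'v::{banach,second_countable_topology} set) \<Rightarrow>
     (real \<times> real) measure \<Rightarrow> (real \<times> real \<Rightarrow> 'v) \<Rightarrow> bool" where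
  "constraint_feasible n x C \<rho> h \<longleftrightarrow> vmeas \<rho> h \<and> (\<forall>i\<in>{1..n}. vm_f \<rho> h (x i) \<in> C i)"

lemma knot_bracket:
  fixes x :: "nat \<Rightarrow> real"
  assumes x: "strict_mono_on {1..n} x" and R: "R \<subseteq> x ` {1..n}" "x 1 \<in> R" "x n \<in> R"
    and i: "i \<in> {1..n}" "x i \<notin> R"
  obtains ia ib where "1 \<le> ia" "ia < i" "i < ib" "ib \<le> n"
    "consecutive_knots R (x ia) (x ib)" "\<forall>j. ia < j \<and> j < ib \<longrightarrow> x j \<notin> R"
proof -
  have "finite R" using R(1) by (rule finite_subset) simp
  have "x 1 \<le> x i" "x i \<le> x n"
    using i(1) by (auto intro!: strict_mono_on_leD[OF x])
  then obtain a b where ab: "consecutive_knots R a b" "a < x i" "x i < b"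
    using consecutive_knots_around[OF \<open>finite R\<close> R(2,3) _ _ i(2)] by blast
  moreover have "a \<in> x ` {1..n}" "b \<in> x ` {1..n}"
    using ab(1) R(1) unfolding consecutive_knots_def by auto
  ultimately obtain ia ib where ia: "ia \<in> {1..n}" "a = x ia" and ib: "ib \<in> {1..n}" "b = x ib"
    by blast
  then have "ia < i" "i < ib"
    using ab(2,3) strict_mono_on_less[OF x] i(1) by auto
  moreover have "x j \<notin> R" if "ia < j" "j < ib" for j
  proof -
    have "j \<in> {1..n}" using that ia ib by auto
    then have "a < x j" "x j < b"
      using that ia ib strict_mono_on_less[OF x] by auto
    then show ?thesis using ab(1) unfolding consecutive_knots_def by blast
  qed
  ultimately show thesis
    using ia ib ab(1) by (intro that) auto
qed

lemma knot_constraints_suffice: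
  fixes x :: "nat \<Rightarrow> real" and C :: "nat \<Rightarrow> 'v::real_vector set"
  assumes x: "strict_mono_on {1..n} x" and R: "R \<subseteq> x ` {1..n}" "x 1 \<in> R" "x n \<in> R"
    and gap: "\<And>ia i ib v w. 1 \<le> ia \<Longrightarrow> ia < i \<Longrightarrow> i < ib \<Longrightarrow> ib \<le> n \<Longrightarrow>
        (\<forall>j. ia < j \<and> j < ib \<longrightarrow> x j \<notin> R) \<Longrightarrow> v \<in> C ia \<Longrightarrow> w \<in> C ib \<Longrightarrow>
        ((x ib - x i) / (x ib - x ia)) *\<^sub>R v + ((x i - x ia) / (x ib - x ia)) *\<^sub>R w \<in> C i"
    and knots: "\<And>i. i \<in> {1..n} \<Longrightarrow> x i \<in> R \<Longrightarrow> relu_net ({-1, 1} \<times> R) A (x i) \<in> C i"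
    and i: "i \<in> {1..n}"
  shows "relu_net ({-1, 1} \<times> R) A (x i) \<in> C i"
proof (cases "x i \<in> R")
  case True
  then show ?thesis using knots i by blast
next
  case False
  then obtain ia ib where b: "1 \<le> ia" "ia < i" "i < ib" "ib \<le> n"
    "consecutive_knots R (x ia) (x ib)" "\<forall>j. ia < j \<and> j < ib \<longrightarrow> x j \<notin> R"
    using knot_bracket[OF x R i] by blast
  have "x ia < x i" "x i < x ib"
    using b(1-4) i strict_mono_on_less[OF x] by auto
  then have "relu_net ({-1, 1} \<times> R) A (x i) =
      ((x ib - x i) / (x ib - x ia)) *\<^sub>R relu_net ({-1, 1} \<times> R) A (x ia) +
      ((x i - x ia) / (x ib - x ia)) *\<^sub>R relu_net ({-1, 1} \<times> R) A (x ib)"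
    using b(5) by (intro relu_net_affine_between) (auto simp: consecutive_knots_def)
  moreover have "relu_net ({-1, 1} \<times> R) A (x ia) \<in> C ia" "relu_net ({-1, 1} \<times> R) A (x ib) \<in> C ib"
    using knots b(1-5) by (auto simp: consecutive_knots_def)
  ultimately show ?thesis
    using gap[OF b(1-4,6)] by simp
qed

lemma data_in_interval:
  fixes x :: "nat \<Rightarrow> real"
  assumes "strict_mono_on {1..n} x" "x 1 = -1" "x n = 1" "i \<in> {1..n}"
  shows "-1 \<le> x i \<and> x i \<le> 1"
  using strict_mono_on_leD[OF assms(1), of 1 i] strict_mono_on_leD[OF assms(1), of i n] assms(2-4)
  by auto

lemma knot_constraints_solvable:
  fixes x :: "nat \<Rightarrow> real" and C :: "nat \<Rightarrow> 'v::real_vector set"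
  assumes x: "strict_mono_on {1..n} x" "x 1 = -1" "x n = 1"
    and R: "R \<subseteq> x ` {1..n}" "x 1 \<in> R" "x n \<in> R"
    and nonempty: "\<And>i. i \<in> {1..n} \<Longrightarrow> C i \<noteq> {}"
  shows "\<exists>A. \<forall>i\<in>{1..n}. x i \<in> R \<longrightarrow> relu_net ({-1, 1} \<times> R) A (x i) \<in> C i"
proof -
  define v where "v r = (SOME w. w \<in> C (inv_into {1..n} x r))" for r
  have "\<And>r. r \<in> R \<Longrightarrow> -1 \<le> r \<and> r \<le> 1"
    using R(1) data_in_interval[OF x] by auto
  then obtain A where A: "\<forall>r\<in>R. relu_net ({-1, 1} \<times> R) A r = v r"
    using relu_net_interpolates[of R "-1" 1 v] R x finite_subset[OF R(1)] by auto
  have "v (x i) \<in> C i" if "i \<in> {1..n}" for i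
    using nonempty[OF that] inv_into_f_f[OF strict_mono_on_imp_inj_on[OF x(1)] that]
    unfolding v_def by (simp add: some_in_eq)
  then show ?thesis using A by (intro exI[of _ A]) auto
qed

lemma relu_net_constraints_minimum_exists:
  fixes x :: "nat \<Rightarrow> real" and C :: "nat \<Rightarrow> 'v::euclidean_space set"
  assumes x: "strict_mono_on {1..n} x" "x 1 = -1" "x n = 1"
    and R: "R \<subseteq> x ` {1..n}" "x 1 \<in> R" "x n \<in> R"
    and closed: "\<And>i. i \<in> {1..n} \<Longrightarrow> closed (C i)"
    and nonempty: "\<And>i. i \<in> {1..n} \<Longrightarrow> C i \<noteq> {}"
    and gap: "\<And>ia i ib v w. 1 \<le> ia \<Longrightarrow> ia < i \<Longrightarrow> i < ib \<Longrightarrow> ib \<le> n \<Longrightarrow>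
        (\<forall>j. ia < j \<and> j < ib \<longrightarrow> x j \<notin> R) \<Longrightarrow> v \<in> C ia \<Longrightarrow> w \<in> C ib \<Longrightarrow>
        ((x ib - x i) / (x ib - x ia)) *\<^sub>R v + ((x i - x ia) / (x ib - x ia)) *\<^sub>R w \<in> C i"
  shows "\<exists>B. (\<forall>i\<in>{1..n}. relu_net ({-1, 1} \<times> R) B (x i) \<in> C i) \<and>
           (\<forall>A. (\<forall>i\<in>{1..n}. relu_net ({-1, 1} \<times> R) A (x i) \<in> C i) \<longrightarrow>
              (\<Sum>p\<in>{-1, 1} \<times> R. norm (B p)) \<le> (\<Sum>p\<in>{-1, 1} \<times> R. norm (A p)))"
proof -
  let ?F = "{-1, 1::real} \<times> R"
  define P where "P A \<longleftrightarrow> (\<forall>i\<in>{1..n}. relu_net ?F A (x i) \<in> C i)" for A :: "real \<times> real \<Rightarrow> 'v"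
  have "finite ?F" using R(1) by (simp add: finite_subset)
  obtain A\<^sub>0 where "\<forall>i\<in>{1..n}. x i \<in> R \<longrightarrow> relu_net ?F A\<^sub>0 (x i) \<in> C i"
    using knot_constraints_solvable[where C = C, OF x R nonempty] by blast
  then have "P A\<^sub>0"
    unfolding P_def using knot_constraints_suffice[OF x(1) R gap] by blast
  moreover have "P B" if "\<And>k. P (A k)" "\<forall>p\<in>?F. (\<lambda>k. A k p) \<longlonglongrightarrow> B p" for A B
    unfolding P_def
  proof
    fix i assume i: "i \<in> {1..n}"
    have "relu_net ?F (A k) (x i) \<in> C i" for k
      using that(1)[of k] i unfolding P_def by blast
    then show "relu_net ?F B (x i) \<in> C i"
      using closed_sequentially[OF closed[OF i], of "\<lambda>k. relu_net ?F (A k) (x i)"]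
        tendsto_relu_net[OF that(2)] by blast
  qed
  ultimately have "\<exists>B. P B \<and> (\<forall>A. P A \<longrightarrow> (\<Sum>p\<in>?F. norm (B p)) \<le> (\<Sum>p\<in>?F. norm (A p)))"
    by (rule sum_norm_minimum_exists[OF \<open>finite ?F\<close>])
  then show ?thesis unfolding P_def .
qed

lemma optimal_measure_on_knots:
  fixes x :: "nat \<Rightarrow> real" and C :: "nat \<Rightarrow> 'v::euclidean_space set"
  assumes x: "strict_mono_on {1..n} x" "x 1 = -1" "x n = 1"
    and R: "R \<subseteq> x ` {1..n}" "x 1 \<in> R" "x n \<in> R"
    and closed: "\<And>i. i \<in> {1..n} \<Longrightarrow> closed (C i)"
    and nonempty: "\<And>i. i \<in> {1..n} \<Longrightarrow> C i \<noteq> {}"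
    and gap: "\<And>ia i ib v w. 1 \<le> ia \<Longrightarrow> ia < i \<Longrightarrow> i < ib \<Longrightarrow> ib \<le> n \<Longrightarrow>
        (\<forall>j. ia < j \<and> j < ib \<longrightarrow> x j \<notin> R) \<Longrightarrow> v \<in> C ia \<Longrightarrow> w \<in> C ib \<Longrightarrow>
        ((x ib - x i) / (x ib - x ia)) *\<^sub>R v + ((x i - x ia) / (x ib - x ia)) *\<^sub>R w \<in> C i"
  shows "\<exists>\<rho> h. constraint_feasible n x C \<rho> h \<and> vm_support \<rho> h \<subseteq> {-1, 1} \<times> R \<and>
           (\<forall>\<rho>' h'. constraint_feasible n x C \<rho>' h' \<longrightarrow> vm_tv \<rho> h \<le> vm_tv \<rho>' h')"
proof -
  let ?F = "{-1, 1::real} \<times> R"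
  obtain B where B: "\<forall>i\<in>{1..n}. relu_net ?F B (x i) \<in> C i"
    and B_min: "\<And>A. \<forall>i\<in>{1..n}. relu_net ?F A (x i) \<in> C i \<Longrightarrow>
        (\<Sum>p\<in>?F. norm (B p)) \<le> (\<Sum>p\<in>?F. norm (A p))"
    using relu_net_constraints_minimum_exists[OF x R closed nonempty gap] by blast
  have "finite R" using R(1) by (rule finite_subset) simp
  have "-1 \<in> R" "1 \<in> R" using R(2,3) x(2,3) by simp_all
  have F: "finite ?F" "?F \<subseteq> Ucal"
    using \<open>finite R\<close> R(1) data_in_interval[OF x] by (auto simp: Ucal_def)
  show ?thesis
  proof (intro exI conjI allI impI)
    show "constraint_feasible n x C (discrete_measure ?F) (discrete_density ?F B)"
      using B vmeas_discrete[OF F, of B] vm_f_discrete[OF F, of B]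
      unfolding constraint_feasible_def by simp
    show "vm_support (discrete_measure ?F) (discrete_density ?F B) \<subseteq> ?F"
      by (rule vm_support_discrete[OF F])
    fix \<rho> h assume feasible: "constraint_feasible n x C \<rho> h"
    then have vm: "vmeas \<rho> h" by (simp add: constraint_feasible_def)
    let ?A = "push_to_knots R \<rho> h"
    have "relu_net ?F ?A (x i) \<in> C i" if "i \<in> {1..n}" "x i \<in> R" for i
      using feasible relu_net_push_to_knots[OF \<open>finite R\<close> \<open>-1 \<in> R\<close> \<open>1 \<in> R\<close> vm that(2)] that(1)
      unfolding constraint_feasible_def by simp
    then have "\<forall>i\<in>{1..n}. relu_net ?F ?A (x i) \<in> C i"
      using knot_constraints_suffice[OF x(1) R gap] by blast
    then have "(\<Sum>p\<in>?F. norm (B p)) \<le> (\<Sum>p\<in>?F. norm (?A p))"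
      by (rule B_min)
    then have "vm_tv (discrete_measure ?F) (discrete_density ?F B) \<le> (\<Sum>p\<in>?F. norm (?A p))"
      using vm_tv_discrete[OF F, of B] by simp
    also have "\<dots> \<le> vm_tv \<rho> h"
      by (rule sum_norm_push_to_knots_le[OF \<open>finite R\<close> \<open>-1 \<in> R\<close> \<open>1 \<in> R\<close> vm])
    finally show "vm_tv (discrete_measure ?F) (discrete_density ?F B) \<le> vm_tv \<rho> h" .
  qed
qed

lemma R_reg_knots:
  assumes "2 \<le> n"
  shows "R_reg n x y \<subseteq> x ` {1..n}" "x 1 \<in> R_reg n x y" "x n \<in> R_reg n x y"
  using assms by (auto simp: R_reg_def)

lemma R_class_knots:
  assumes "2 \<le> n"
  shows "R_class n x y \<subseteq> x ` {1..n}" "x 1 \<in> R_class n x y" "x n \<in> R_class n x y"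
  using assms by (auto simp: R_class_def)

lemma slope_eq_if_not_in_R_reg:
  assumes "x j \<notin> R_reg n x y" "2 \<le> j" "j \<le> n - 1"
  shows "(y (j + 1) - y j) / (x (j + 1) - x j) = (y j - y (j - 1)) / (x j - x (j - 1))"
  using assms unfolding R_reg_def by blast

lemma label_eq_if_not_in_R_class:
  assumes "x j \<notin> R_class n x y" "2 \<le> j" "j \<le> n - 1"
  shows "y (j - 1) = y j" "y (j + 1) = y j"
  using assms unfolding R_class_def by blast+

lemma R_class_gap_const:
  assumes ia: "1 \<le> ia" "ia < i" "i < ib" "ib \<le> n"
    and gap: "\<forall>j. ia < j \<and> j < ib \<longrightarrow> x j \<notin> R_class n x y"
  shows "y i = y ia" "y ib = y ia"
proof -
  have step: "y (Suc j) = y j" if "ia \<le> j" "j < ib" for j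
  proof (cases "Suc j < ib")
    case True
    then have "x (Suc j) \<notin> R_class n x y" "2 \<le> Suc j" "Suc j \<le> n - 1"
      using gap that ia by auto
    from label_eq_if_not_in_R_class(1)[OF this] show ?thesis by simp
  next
    case False
    then have "x j \<notin> R_class n x y" "2 \<le> j" "j \<le> n - 1"
      using gap that ia by auto
    from label_eq_if_not_in_R_class(2)[OF this] show ?thesis by simp
  qed
  have const: "j \<le> ib \<longrightarrow> y j = y ia" if "ia \<le> j" for j
    using that by (induction j rule: dec_induct) (use step in auto)
  show "y i = y ia" "y ib = y ia"
    using const[of i] const[of ib] ia by auto
qed

lemma interpolate_affine:
  fixes a b t c m :: real
  assumes "a < b"
  shows "((b - t) / (b - a)) * c + ((t - a) / (b - a)) * (c + m * (b - a)) = c + m * (t - a)"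
  using assms by (simp add: divide_simps) (simp add: algebra_simps)

lemma R_reg_gap_affine:
  fixes x y :: "nat \<Rightarrow> real"
  assumes x: "strict_mono_on {1..n} x" and ia: "1 \<le> ia" "ia < i" "i < ib" "ib \<le> n"
    and gap: "\<forall>j. ia < j \<and> j < ib \<longrightarrow> x j \<notin> R_reg n x y"
  shows "((x ib - x i) / (x ib - x ia)) * y ia + ((x i - x ia) / (x ib - x ia)) * y ib = y i"
proof -
  define slope where "slope j = (y (Suc j) - y j) / (x (Suc j) - x j)" for j
  have slope_const: "j < ib \<longrightarrow> slope j = slope ia" if "ia \<le> j" for j
    using that
  proof (induction j rule: dec_induct)
    case (step j)
    show ?case
    proof
      assume "Suc j < ib"
      then have "x (Suc j) \<notin> R_reg n x y" "2 \<le> Suc j" "Suc j \<le> n - 1"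
        using gap step.hyps ia by auto
      from slope_eq_if_not_in_R_reg[OF this] have "slope (Suc j) = slope j"
        by (simp add: slope_def)
      then show "slope (Suc j) = slope ia" using step \<open>Suc j < ib\<close> by simp
    qed
  qed simp
  have line: "j \<le> ib \<longrightarrow> y j = y ia + slope ia * (x j - x ia)" if "ia \<le> j" for j
    using that
  proof (induction j rule: dec_induct)
    case (step j)
    show ?case
    proof
      assume "Suc j \<le> ib"
      then have "x j < x (Suc j)"
        using step.hyps ia strict_mono_on_less[OF x] by auto
      moreover have "(y (Suc j) - y j) / (x (Suc j) - x j) = slope ia"
        using slope_const[OF step.hyps(1)] \<open>Suc j \<le> ib\<close> slope_def[of j] by simp
      ultimately have "y (Suc j) = y j + slope ia * (x (Suc j) - x j)"
        by (simp add: divide_eq_eq algebra_simps)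
      then show "y (Suc j) = y ia + slope ia * (x (Suc j) - x ia)"
        using step.IH \<open>Suc j \<le> ib\<close> by (simp add: algebra_simps)
    qed
  qed simp
  have "x ia < x ib"
    using ia strict_mono_on_less[OF x] by auto
  from interpolate_affine[OF this, of "x i" "y ia" "slope ia"] show ?thesis
    using line[of i] line[of ib] ia by simp
qed

definition margin_set :: "'k \<Rightarrow> (real ^ 'k::finite) set" where
  "margin_set c = (\<Inter>l. {v. (if c \<noteq> l then 1 else 0) \<le> (axis c 1 - axis l 1) \<bullet> v})"

lemma closed_margin_set: "closed (margin_set c)"
  unfolding margin_set_def by (intro closed_INT ballI closed_halfspace_ge)

lemma convex_margin_set: "convex (margin_set c)"
  unfolding margin_set_def by (intro convex_INT ballI convex_halfspace_ge)

lemma axis_in_margin_set: "axis c 1 \<in> margin_set c"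
  by (auto simp: margin_set_def inner_diff_left inner_axis_axis)

lemma regression_optimum_exists:
  fixes x y :: "nat \<Rightarrow> real"
  assumes n: "2 \<le> n" and x: "strict_mono_on {1..n} x" "x 1 = -1" "x n = 1"
  shows "\<exists>\<rho> h. reg_feasible n x y \<rho> h \<and> vm_support \<rho> h \<subseteq> F_reg n x y \<and>
           (\<forall>\<rho>' h'. reg_feasible n x y \<rho>' h' \<longrightarrow> vm_tv \<rho> h \<le> vm_tv \<rho>' h')"
proof -
  have "reg_feasible n x y = constraint_feasible n x (\<lambda>i. {y i})"
    by (auto simp: fun_eq_iff reg_feasible_def constraint_feasible_def)
  moreover have "((x ib - x i) / (x ib - x ia)) *\<^sub>R v + ((x i - x ia) / (x ib - x ia)) *\<^sub>R w \<in> {y i}"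
    if "1 \<le> ia" "ia < i" "i < ib" "ib \<le> n" "\<forall>j. ia < j \<and> j < ib \<longrightarrow> x j \<notin> R_reg n x y"
      "v \<in> {y ia}" "w \<in> {y ib}" for ia i ib v w
    using R_reg_gap_affine[OF x(1) that(1-5)] that(6,7) by simp
  then have "\<exists>\<rho> h. constraint_feasible n x (\<lambda>i. {y i}) \<rho> h \<and> vm_support \<rho> h \<subseteq> {-1, 1} \<times> R_reg n x y \<and>
      (\<forall>\<rho>' h'. constraint_feasible n x (\<lambda>i. {y i}) \<rho>' h' \<longrightarrow> vm_tv \<rho> h \<le> vm_tv \<rho>' h')"
    by (intro optimal_measure_on_knots[OF x R_reg_knots[OF n]]) simp_all
  ultimately show ?thesis unfolding F_reg_def by simp
qed

lemma classification_optimum_exists: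
  fixes x :: "nat \<Rightarrow> real" and y :: "nat \<Rightarrow> 'k::finite"
  assumes n: "2 \<le> n" and x: "strict_mono_on {1..n} x" "x 1 = -1" "x n = 1"
  shows "\<exists>\<rho> h. class_feasible n x y \<rho> h \<and> vm_support \<rho> h \<subseteq> F_class n x y \<and>
           (\<forall>\<rho>' h'. class_feasible n x y \<rho>' h' \<longrightarrow> vm_tv \<rho> h \<le> vm_tv \<rho>' h')"
proof -
  have "class_feasible n x y = constraint_feasible n x (\<lambda>i. margin_set (y i))"
    by (auto simp: fun_eq_iff class_feasible_def constraint_feasible_def margin_set_def)
  moreover have "((x ib - x i) / (x ib - x ia)) *\<^sub>R v + ((x i - x ia) / (x ib - x ia)) *\<^sub>R w \<in> margin_set (y i)"
    if "1 \<le> ia" "ia < i" "i < ib" "ib \<le> n" "\<forall>j. ia < j \<and> j < ib \<longrightarrow> x j \<notin> R_class n x y"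
      "v \<in> margin_set (y ia)" "w \<in> margin_set (y ib)" for ia i ib v w
  proof -
    have "x ia < x i" "x i < x ib"
      using that(1-4) strict_mono_on_less[OF x(1)] by auto
    moreover have "v \<in> margin_set (y i)" "w \<in> margin_set (y i)"
      using R_class_gap_const[OF that(1-5)] that(6,7) by simp_all
    ultimately show ?thesis
      by (intro convexD[OF convex_margin_set]) (simp_all add: divide_simps)
  qed
  then have "\<exists>\<rho> h. constraint_feasible n x (\<lambda>i. margin_set (y i)) \<rho> h \<and>
      vm_support \<rho> h \<subseteq> {-1, 1} \<times> R_class n x y \<and>
      (\<forall>\<rho>' h'. constraint_feasible n x (\<lambda>i. margin_set (y i)) \<rho>' h' \<longrightarrow> vm_tv \<rho> h \<le> vm_tv \<rho>' h')"
    using closed_margin_set axis_in_margin_set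
    by (intro optimal_measure_on_knots[OF x R_class_knots[OF n]]) blast+
  ultimately show ?thesis unfolding F_class_def by simp
qed

theorem theorem1:
  fixes n :: nat and x :: "nat \<Rightarrow> real"
    and yr :: "nat \<Rightarrow> real" and yc :: "nat \<Rightarrow> 'k::finite"
  assumes "n \<ge> 2"
    and "x 1 = -1" and "x n = 1"
    and "\<forall>i. 1 \<le> i \<and> i < n \<longrightarrow> x i < x (i + 1)"
  shows "(\<exists>\<rho> h. reg_feasible n x yr \<rho> h \<and> vm_support \<rho> h \<subseteq> F_reg n x yr \<and>
            (\<forall>\<rho>' h'. reg_feasible n x yr \<rho>' h' \<longrightarrow> vm_tv \<rho> h \<le> vm_tv \<rho>' h'))
       \<and> (\<exists>\<rho> h. class_feasible n x yc \<rho> h \<and> vm_support \<rho> h \<subseteq> F_class n x yc \<and>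
            (\<forall>\<rho>' h'. class_feasible n x yc \<rho>' h' \<longrightarrow> vm_tv \<rho> h \<le> vm_tv \<rho>' h'))"
proof -
  have x_mono: "strict_mono_on {1..n} x"
  proof (rule strict_mono_onI)
    fix i j :: nat assume "i \<in> {1..n}" "j \<in> {1..n}" "i < j"
    moreover have "x k < x (Suc k)" if "k \<in> {1..<n}" for k
      using assms(4) that by simp
    ultimately show "x i < x j"
      using lift_Suc_mono_less_ivl[of "{1..<n}" x i j] by auto
  qed
  show ?thesis
    using regression_optimum_exists[OF assms(1) x_mono assms(2,3)]
      classification_optimum_exists[OF assms(1) x_mono assms(2,3)] by (rule conjI)
qed

end
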